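(* Let $G=(V,E)$ be an undirected graph with $V=\{v_1,\ldots,v_n\}$, $n\geq 3$, and let $r,g,b$ be three distinct constants. For $1\leq i<j\leq n$ let $r_{ij}=\{(x,y)\in\{r,g,b\}^2 : x\neq y\}$ if $\{v_i,v_j\}\in E$ and $r_{ij}=\{r,g,b\}^2$ otherwise. Let $\rho$ be the constraint with scope $(X_1,\ldots,X_n)$ whose relation contains, for each pair $i<j$ and each $(x,y)\in r_{ij}$, exactly one tuple $t$ with $t[X_i]=x$, $t[X_j]=y$ and $t[X_\ell]=d_t$ for all $\ell\notin\{i,j\}$, where the constants $d_t$ are pairwise distinct, distinct from $r,g,b$, and each $d_t$ occurs only in the tuple $t$ (and nothing else is in the relation). Then $sol(\Pi_{S_2}(\rho))\neq\rho$ if and only if $G$ is 3-colorable.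
   Context: For a constraint $\rho$ and a set $W$ of its variables, $\Pi_W(\rho)$ is the projection of $\rho$ onto $W$. $S_2$ is the set of all nonempty subsets of the variables of $\rho$ of size at most $2$, and $\Pi_{S_2}(\rho)$ is the constraint network over the variables of $\rho$ with constraints $\Pi_W(\rho)$ for $W\in S_2$. For a network $N$, $sol(N)$ is the set of assignments to all variables whose restriction to every constraint scope lies in the corresponding relation (the natural join of the relations). A graph is 3-colorable if there is a map $V\to\{r,g,b\}$ assigning distinct colors to the endpoints of every edge. *)

theory Defs
  imports Main
begin

(* Variables X_1..X_n are indexed 0..<n; a tuple / assignment is a list of length n. *)

definition proj :: "nat set \<Rightarrow> 'v list \<Rightarrow> (nat \<Rightarrow> 'v option)" where
  "proj W t = (\<lambda>l. if l \<in> W then Some (t ! l) else None)"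

definition Proj :: "nat set \<Rightarrow> 'v list set \<Rightarrow> (nat \<Rightarrow> 'v option) set" where
  "Proj W \<rho> = proj W ` \<rho>"

definition S2 :: "nat \<Rightarrow> nat set set" where
  "S2 n = {W. W \<subseteq> {0..<n} \<and> W \<noteq> {} \<and> card W \<le> 2}"

definition Pi_S2 :: "nat \<Rightarrow> 'v list set \<Rightarrow> (nat set \<times> (nat \<Rightarrow> 'v option) set) set" where
  "Pi_S2 n \<rho> = {(W, Proj W \<rho>) | W. W \<in> S2 n}"

definition sol :: "nat \<Rightarrow> (nat set \<times> (nat \<Rightarrow> 'v option) set) set \<Rightarrow> 'v list set" where
  "sol n N = {s. length s = n \<and> (\<forall>(W, R) \<in> N. proj W s \<in> R)}"

definition graph_on :: "nat \<Rightarrow> nat set set \<Rightarrow> bool" where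
  "graph_on n E \<longleftrightarrow> (\<forall>e\<in>E. \<exists>u w. u < n \<and> w < n \<and> u \<noteq> w \<and> e = {u, w})"

datatype colour = Red | Green | Blue

definition three_colorable :: "nat \<Rightarrow> nat set set \<Rightarrow> bool" where
  "three_colorable n E \<longleftrightarrow>
     (\<exists>c :: nat \<Rightarrow> colour. \<forall>u<n. \<forall>w<n. {u, w} \<in> E \<longrightarrow> c u \<noteq> c w)"

definition rel_ij :: "nat set set \<Rightarrow> 'v \<Rightarrow> 'v \<Rightarrow> 'v \<Rightarrow> nat \<Rightarrow> nat \<Rightarrow> ('v \<times> 'v) set" where
  "rel_ij E r g b i j =
     (if {i, j} \<in> E then {(x, y). x \<in> {r, g, b} \<and> y \<in> {r, g, b} \<and> x \<noteq> y}
      else {r, g, b} \<times> {r, g, b})"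

(* the constraint rho; d i j x y is the fresh constant d_t for the tuple t given by (i,j,x,y) *)
definition rho :: "nat \<Rightarrow> nat set set \<Rightarrow> 'v \<Rightarrow> 'v \<Rightarrow> 'v \<Rightarrow>
                   (nat \<Rightarrow> nat \<Rightarrow> 'v \<Rightarrow> 'v \<Rightarrow> 'v) \<Rightarrow> 'v list set" where
  "rho n E r g b d =
     {map (\<lambda>l. if l = i then x else if l = j then y else d i j x y) [0..<n] | i j x y.
        i < j \<and> j < n \<and> (x, y) \<in> rel_ij E r g b i j}"

end

theory Submission
  imports Defs
begin

(* The relation rho consists of "gadget" tuples tup i j x y: colours x, y at
   positions i < j and one fresh constant d i j x y everywhere else.  A solution s of the
   binary projection network is exactly a length-n list every pair of whose positions is
   matched by some tuple of rho (lemma sol_Pi_S2_iff); every tuple of rho is a solution.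
   (1) If a solution s has a non-colour entry at k, then every tuple matching s at k carries
       the fresh constant of s ! k, hence by injectivity of d it is one and the same tuple t,
       and matching every further position l together with k forces s = t, so s is in rho.
       Thus a solution outside rho is colour-valued, and matching each edge {u,w} by a tuple
       forces the tuple to be tup u w x y with x, y different: s is a proper 3-colouring.
   (2) Conversely, a proper 3-colouring written as a list solves the network, since each pair
       of positions is matched by the gadget tuple of that pair, and it is not in rho because
       with n >= 3 every tuple of rho contains a fresh constant. *)

lemma S2_eq_pairs: "S2 n = {{k, l} | k l. k < n \<and> l < n}"
proof (intro set_eqI iffI)
  fix W assume "W \<in> S2 n"
  then have W: "W \<subseteq> {0..<n}" "W \<noteq> {}" "card W \<le> 2" by (auto simp: S2_def)
  have "finite W" using W(1) finite_subset by blast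
  then have "card W > 0" using W(2) by (simp add: card_gt_0_iff)
  then have "card W = 1 \<or> card W = 2" using W(3) by linarith
  then obtain k l where "W = {k, l}"
    by (metis card_1_singletonE card_2_iff insert_absorb2)
  with W(1) show "W \<in> {{k, l} | k l. k < n \<and> l < n}" by auto
next
  fix W assume "W \<in> {{k, l} | k l. k < n \<and> l < n}"
  then show "W \<in> S2 n" by (auto simp: S2_def card_insert_if)
qed

lemma proj_eq: "proj W t = proj W s \<longleftrightarrow> (\<forall>m\<in>W. t ! m = s ! m)"
  unfolding proj_def fun_eq_iff by (metis option.inject)

lemma mem_Proj: "proj W s \<in> Proj W R \<longleftrightarrow> (\<exists>t\<in>R. \<forall>m\<in>W. t ! m = s ! m)"
  unfolding Proj_def image_iff by (metis proj_eq)

lemma sol_Pi_S2_iff: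
  "s \<in> sol n (Pi_S2 n R) \<longleftrightarrow>
     length s = n \<and> (\<forall>k<n. \<forall>l<n. \<exists>t\<in>R. t ! k = s ! k \<and> t ! l = s ! l)"
proof -
  have "s \<in> sol n (Pi_S2 n R) \<longleftrightarrow> length s = n \<and> (\<forall>W\<in>S2 n. proj W s \<in> Proj W R)"
    unfolding sol_def Pi_S2_def by blast
  also have "(\<forall>W\<in>S2 n. proj W s \<in> Proj W R) \<longleftrightarrow> (\<forall>k<n. \<forall>l<n. proj {k, l} s \<in> Proj {k, l} R)"
    unfolding S2_eq_pairs by blast
  finally show ?thesis by (simp add: mem_Proj)
qed

lemma subset_sol_Pi_S2:
  assumes "\<And>t. t \<in> R \<Longrightarrow> length t = n"
  shows "R \<subseteq> sol n (Pi_S2 n R)"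
  using assms by (auto simp: sol_Pi_S2_iff)

definition tup :: "nat \<Rightarrow> (nat \<Rightarrow> nat \<Rightarrow> 'v \<Rightarrow> 'v \<Rightarrow> 'v) \<Rightarrow> nat \<Rightarrow> nat \<Rightarrow> 'v \<Rightarrow> 'v \<Rightarrow> 'v list"
  where "tup n d i j x y = map (\<lambda>l. if l = i then x else if l = j then y else d i j x y) [0..<n]"

lemma length_tup [simp]: "length (tup n d i j x y) = n"
  by (simp add: tup_def)

lemma nth_tup: "l < n \<Longrightarrow> tup n d i j x y ! l = (if l = i then x else if l = j then y else d i j x y)"
  by (simp add: tup_def)

lemma rel_ij_colours: "(x, y) \<in> rel_ij E r g b i j \<Longrightarrow> x \<in> {r, g, b} \<and> y \<in> {r, g, b}"
  by (auto simp: rel_ij_def split: if_splits)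

lemma graph_on_no_loop: "graph_on n E \<Longrightarrow> {u, u} \<notin> E"
  unfolding graph_on_def by (metis doubleton_eq_iff insert_absorb2)

lemma UNIV_colour: "(UNIV :: colour set) = {Red, Green, Blue}"
  using colour.exhaust by auto

locale gadget =
  fixes n :: nat and E :: "nat set set" and r g b :: 'v
    and d :: "nat \<Rightarrow> nat \<Rightarrow> 'v \<Rightarrow> 'v \<Rightarrow> 'v"
  assumes colours_distinct: "r \<noteq> g" "r \<noteq> b" "g \<noteq> b"
    and d_inj: "\<And>i j x y i' j' x' y'. i < j \<Longrightarrow> j < n \<Longrightarrow> (x, y) \<in> rel_ij E r g b i j \<Longrightarrow>
           i' < j' \<Longrightarrow> j' < n \<Longrightarrow> (x', y') \<in> rel_ij E r g b i' j' \<Longrightarrow>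
           d i j x y = d i' j' x' y' \<Longrightarrow> (i, j, x, y) = (i', j', x', y')"
    and d_fresh: "\<And>i j x y. i < j \<Longrightarrow> j < n \<Longrightarrow> (x, y) \<in> rel_ij E r g b i j \<Longrightarrow>
           d i j x y \<notin> {r, g, b}"
begin

abbreviation R :: "'v list set" where "R \<equiv> rho n E r g b d"

definition valid :: "nat \<Rightarrow> nat \<Rightarrow> 'v \<Rightarrow> 'v \<Rightarrow> bool" where
  "valid i j x y \<longleftrightarrow> i < j \<and> j < n \<and> (x, y) \<in> rel_ij E r g b i j"

lemma mem_R: "t \<in> R \<longleftrightarrow> (\<exists>i j x y. valid i j x y \<and> t = tup n d i j x y)"
  by (auto simp: rho_def tup_def valid_def)

(* Hence sol (Pi_S2 rho) differs from rho exactly when it has an element outside rho. *)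
lemma R_sol: "R \<subseteq> sol n (Pi_S2 n R)"
  by (rule subset_sol_Pi_S2) (auto simp: mem_R)

lemma nth_tup_colour:
  assumes "valid i j x y" "k < n"
  shows "tup n d i j x y ! k \<in> {r, g, b} \<longleftrightarrow> k = i \<or> k = j"
    and "tup n d i j x y ! k \<notin> {r, g, b} \<Longrightarrow> tup n d i j x y ! k = d i j x y"
  using assms d_fresh rel_ij_colours[of x y E r g b i j]
  by (auto simp: nth_tup valid_def)

(* Direction (1), first half: a solution with a fresh constant somewhere is a tuple of rho,
   since that constant identifies the unique tuple that can match it. *)
lemma sol_fresh_entry_in_R:
  assumes s: "s \<in> sol n (Pi_S2 n R)" and k: "k < n" "s ! k \<notin> {r, g, b}"
  shows "s \<in> R"
proof -
  have len: "length s = n" and match: "\<And>k l. k < n \<Longrightarrow> l < n \<Longrightarrow>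
      \<exists>t\<in>R. t ! k = s ! k \<and> t ! l = s ! l"
    using s by (auto simp: sol_Pi_S2_iff)
  have same: "t = t'" if "t \<in> R" "t ! k = s ! k" "t' \<in> R" "t' ! k = s ! k" for t t'
  proof -
    obtain i j x y where ij: "valid i j x y" "t = tup n d i j x y" using \<open>t \<in> R\<close> mem_R by blast
    obtain i' j' x' y' where ij': "valid i' j' x' y'" "t' = tup n d i' j' x' y'"
      using \<open>t' \<in> R\<close> mem_R by blast
    have "d i j x y = d i' j' x' y'"
      using nth_tup_colour(2)[OF ij(1) k(1)] nth_tup_colour(2)[OF ij'(1) k(1)] that ij ij' k
      by simp
    then have "(i, j, x, y) = (i', j', x', y')"
      using d_inj ij(1) ij'(1) by (auto simp: valid_def)
    then show ?thesis using ij ij' by simp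
  qed
  obtain t where t: "t \<in> R" "t ! k = s ! k" using match[OF k(1) k(1)] by blast
  have "s = t"
  proof (rule nth_equalityI)
    show "length s = length t" using t(1) len by (auto simp: mem_R)
    fix l assume "l < length s"
    then obtain t' where "t' \<in> R" "t' ! k = s ! k" "t' ! l = s ! l"
      using match[OF k(1)] len by blast
    then show "s ! l = t ! l" using same[OF t] by metis
  qed
  then show ?thesis using t(1) by simp
qed

definition paint :: "colour \<Rightarrow> 'v" where
  "paint c = (case c of Red \<Rightarrow> r | Green \<Rightarrow> g | Blue \<Rightarrow> b)"

lemma range_paint: "range paint = {r, g, b}"
  by (simp add: UNIV_colour paint_def)

lemma paint_inj: "paint c = paint c' \<longleftrightarrow> c = c'"
  using colours_distinct by (cases c; cases c') (auto simp: paint_def)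

(* Direction (1): a solution outside rho is colour-valued, and reading its entries as colours
   gives a proper colouring, because an edge {u, w} can only be matched by tup u w x y. *)
lemma sol_not_R_colourable:
  assumes E: "graph_on n E" and s: "s \<in> sol n (Pi_S2 n R)" "s \<notin> R"
  shows "three_colorable n E"
proof -
  have colour: "s ! k \<in> {r, g, b}" if "k < n" for k
    using sol_fresh_entry_in_R[OF s(1) that] s(2) by blast
  have "\<forall>k. \<exists>x. k < n \<longrightarrow> paint x = s ! k"
    using colour range_paint by (metis rangeE)
  then obtain c where c: "\<And>k. k < n \<Longrightarrow> paint (c k) = s ! k" by metis
  have "s ! u \<noteq> s ! w" if uw: "u < n" "w < n" "{u, w} \<in> E" for u w
  proof -
    have "u \<noteq> w" using graph_on_no_loop[OF E] uw(3) by auto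
    obtain t where t: "t \<in> R" "t ! u = s ! u" "t ! w = s ! w"
      using s(1) uw by (auto simp: sol_Pi_S2_iff)
    then obtain i j x y where ij: "valid i j x y" "t = tup n d i j x y" using mem_R by blast
    have "u = i \<or> u = j" "w = i \<or> w = j"
      using nth_tup_colour(1)[OF ij(1)] uw(1,2) colour t(2,3) ij(2) by auto
    with \<open>u \<noteq> w\<close> have "{u, w} = {i, j}" by auto
    then have "x \<noteq> y" using ij(1) uw(3) by (auto simp: valid_def rel_ij_def)
    then show ?thesis
      using t ij \<open>{u, w} = {i, j}\<close> \<open>u \<noteq> w\<close> uw(1,2) by (auto simp: nth_tup doubleton_eq_iff)
  qed
  then show ?thesis unfolding three_colorable_def using c by metis
qed

(* Direction (2): a proper colouring, written as a list of colour values, solves the network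
   (each pair of positions is matched by its own gadget tuple) but is not in rho, since for
   n >= 3 every tuple of rho has a fresh constant at some third position. *)
lemma colouring_sol_not_R:
  assumes n: "n \<ge> 3" and c: "\<And>u w. u < n \<Longrightarrow> w < n \<Longrightarrow> {u, w} \<in> E \<Longrightarrow> c u \<noteq> c w"
  defines "s \<equiv> map (paint \<circ> c) [0..<n]"
  shows "s \<in> sol n (Pi_S2 n R)" and "s \<notin> R"
proof -
  have s_nth: "k < n \<Longrightarrow> s ! k = paint (c k)" for k by (simp add: s_def)
  have gadget_match: "tup n d k l (paint (c k)) (paint (c l)) \<in> R" if "k < l" "l < n" for k l
  proof -
    have "paint (c k) \<in> {r, g, b}" "paint (c l) \<in> {r, g, b}" using range_paint by blast+
    moreover have "{k, l} \<in> E \<Longrightarrow> paint (c k) \<noteq> paint (c l)"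
      using c[of k l] that paint_inj by simp
    ultimately have "valid k l (paint (c k)) (paint (c l))"
      using that by (auto simp: valid_def rel_ij_def)
    then show ?thesis unfolding mem_R by blast
  qed
  have distinct_match: "\<exists>t\<in>R. t ! k = s ! k \<and> t ! l = s ! l"
    if "k < n" "l < n" "k \<noteq> l" for k l
  proof (cases "k < l")
    case True
    with that show ?thesis
      by (intro bexI[OF _ gadget_match[OF True \<open>l < n\<close>]]) (simp add: nth_tup s_nth)
  next
    case False
    then have "l < k" using that by simp
    with that show ?thesis
      by (intro bexI[OF _ gadget_match[OF \<open>l < k\<close> \<open>k < n\<close>]]) (simp add: nth_tup s_nth)
  qed
  have "\<exists>t\<in>R. t ! k = s ! k \<and> t ! l = s ! l" if "k < n" "l < n" for k l
  proof (cases "k = l")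
    case True
    (* a single position is matched together with any other position *)
    define k' where "k' = (if k = 0 then 1 else 0 :: nat)"
    have "k' < n" "k \<noteq> k'" using n by (auto simp: k'_def)
    then show ?thesis using distinct_match[of k k'] that True by blast
  next
    case False
    then show ?thesis using distinct_match that by blast
  qed
  then show "s \<in> sol n (Pi_S2 n R)" by (simp add: sol_Pi_S2_iff s_def)
  show "s \<notin> R"
  proof
    assume "s \<in> R"
    then obtain i j x y where ij: "valid i j x y" "s = tup n d i j x y" using mem_R by blast
    have "\<exists>m\<in>{0::nat, 1, 2}. m \<noteq> i \<and> m \<noteq> j" by auto
    then obtain m :: nat where m: "m \<in> {0, 1, 2}" "m \<noteq> i" "m \<noteq> j" by blast
    then have "m < n" using n by auto
    then have "s ! m \<notin> {r, g, b}" using nth_tup_colour(1)[OF ij(1)] m ij(2) by auto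
    then show False using s_nth[OF \<open>m < n\<close>] range_paint by auto
  qed
qed

end

theorem mainTheorem9:
  fixes n :: nat and E :: "nat set set" and r g b :: 'v
    and d :: "nat \<Rightarrow> nat \<Rightarrow> 'v \<Rightarrow> 'v \<Rightarrow> 'v"
  assumes "n \<ge> 3"
    and "graph_on n E"
    and "r \<noteq> g" and "r \<noteq> b" and "g \<noteq> b"
    and "\<And>i j x y i' j' x' y'. i < j \<Longrightarrow> j < n \<Longrightarrow> (x, y) \<in> rel_ij E r g b i j \<Longrightarrow>
           i' < j' \<Longrightarrow> j' < n \<Longrightarrow> (x', y') \<in> rel_ij E r g b i' j' \<Longrightarrow>
           d i j x y = d i' j' x' y' \<Longrightarrow> (i, j, x, y) = (i', j', x', y')"
    and "\<And>i j x y. i < j \<Longrightarrow> j < n \<Longrightarrow> (x, y) \<in> rel_ij E r g b i j \<Longrightarrow>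
           d i j x y \<notin> {r, g, b}"
  shows "sol n (Pi_S2 n (rho n E r g b d)) \<noteq> rho n E r g b d \<longleftrightarrow> three_colorable n E"
proof -
  interpret gadget n E r g b d
    using assms(3-7) by unfold_locales blast+
  show ?thesis
  proof
    assume "sol n (Pi_S2 n R) \<noteq> R"
    then obtain s where "s \<in> sol n (Pi_S2 n R)" "s \<notin> R" using R_sol by blast
    then show "three_colorable n E" using sol_not_R_colourable assms(2) by blast
  next
    assume "three_colorable n E"
    then obtain c :: "nat \<Rightarrow> colour" where "\<forall>u<n. \<forall>w<n. {u, w} \<in> E \<longrightarrow> c u \<noteq> c w"
      unfolding three_colorable_def by blast
    then show "sol n (Pi_S2 n R) \<noteq> R"
      using colouring_sol_not_R[OF assms(1), of c] by blast
  qed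
qed

end
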